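(* Let $n>3$ and $k,m\geq2$ with $k+m=n+1$. Write $\mathbb{R}^{n+1}\equiv\mathbb{C}\times\mathbb{R}^{k-2}\times\mathbb{C}\times\mathbb{R}^{m-2}$ with points $(z_1,x_1,z_2,x_2)$, and let $O(k)\times O(m)$ act on $\mathbb{R}^{n+1}$ with $O(k)$ acting on the first factor $\mathbb{C}\times\mathbb{R}^{k-2}\equiv\mathbb{R}^k$ and $O(m)$ on the second factor $\mathbb{C}\times\mathbb{R}^{m-2}\equiv\mathbb{R}^m$. If $u:\mathbb{S}^n\to\mathbb{R}$ is $[O(k)\times O(m)]$-invariant and $$u(z_1,x_1,z_2,x_2)=-u(-\bar z_2,x_1,\bar z_1,x_2)\qquad\text{for all }(z_1,x_1,z_2,x_2),$$ then $u\equiv0$.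
   Context: $\mathbb{S}^n$ is the unit sphere in $\mathbb{R}^{n+1}$; $u$ being $[O(k)\times O(m)]$-invariant means $u(\gamma y)=u(y)$ for all $\gamma\in O(k)\times O(m)$ and $y\in\mathbb{S}^n$. *)

theory Defs
  imports Main "HOL-Analysis.Analysis"
begin

text \<open>Points of R^(n+1) are represented as functions y :: nat => real with
  y i = 0 for i > n; coordinates 0..n.  With k + m = n + 1, coordinates 0..k-1
  form the first factor R^k = C x R^(k-2) (z1 = y0 + i y1, x1 = (y2..y(k-1))), and
  coordinates k..n form the second factor R^m = C x R^(m-2)
  (z2 = yk + i y(k+1), x2 = (y(k+2)..yn)).\<close>

definition sphere_n :: "nat \<Rightarrow> (nat \<Rightarrow> real) set" where
  "sphere_n n = {y. (\<forall>i>n. y i = 0) \<and> (\<Sum>i\<le>n. (y i)\<^sup>2) = 1}"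

definition orth_mat :: "nat \<Rightarrow> (nat \<Rightarrow> nat \<Rightarrow> real) \<Rightarrow> bool" where
  "orth_mat d A \<longleftrightarrow>
     (\<forall>i<d. \<forall>j<d. (\<Sum>l<d. A l i * A l j) = (if i = j then 1 else 0))"

definition act_OkOm ::
  "nat \<Rightarrow> nat \<Rightarrow> (nat \<Rightarrow> nat \<Rightarrow> real) \<Rightarrow> (nat \<Rightarrow> nat \<Rightarrow> real) \<Rightarrow> (nat \<Rightarrow> real) \<Rightarrow> (nat \<Rightarrow> real)" where
  "act_OkOm k m A B y = (\<lambda>i. if i < k then (\<Sum>j<k. A i j * y j)
                              else if i < k + m then (\<Sum>j<m. B (i - k) j * y (k + j))
                              else 0)"

definition invariant_OkOm :: "nat \<Rightarrow> nat \<Rightarrow> ((nat \<Rightarrow> real) \<Rightarrow> real) \<Rightarrow> bool" where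
  "invariant_OkOm k m u \<longleftrightarrow>
     (\<forall>A B. orth_mat k A \<longrightarrow> orth_mat m B \<longrightarrow>
        (\<forall>y\<in>sphere_n (k + m - 1). u (act_OkOm k m A B y) = u y))"

text \<open>The map (z1,x1,z2,x2) |-> (-conj z2, x1, conj z1, x2).
  -conj z2 = -y_k + i y_(k+1);  conj z1 = y_0 - i y_1.\<close>
definition swap_map :: "nat \<Rightarrow> (nat \<Rightarrow> real) \<Rightarrow> (nat \<Rightarrow> real)" where
  "swap_map k y = (\<lambda>i. if i = 0 then - y k
                       else if i = 1 then y (k + 1)
                       else if i = k then y 0
                       else if i = k + 1 then - y 1
                       else y i)"

end

theory Submission
  imports Defs
begin

text \<open>Householder reflections make \<open>O(d)\<close> transitive on spheres, so an
  \<open>O(k) \<times> O(m)\<close>-invariant \<open>u\<close> is a function \<open>f(s)\<close> of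
  \<open>s = |z\<^sub>1|\<^sup>2 + |x\<^sub>1|\<^sup>2\<close> alone. At points with
  \<open>z\<^sub>1 = z\<^sub>2\<close> real the swap only changes the sign of \<open>z\<^sub>1\<close>, which keeps
  \<open>s\<close>, so \<open>f(s) = -f(s)\<close>; such points realise every \<open>s \<le> 1/2\<close> if \<open>m > 2\<close>
  and every \<open>s \<ge> 1/2\<close> if \<open>k > 2\<close>. At points with \<open>x\<^sub>1 = x\<^sub>2 = 0\<close> the swap
  exchanges \<open>|z\<^sub>1|\<close> and \<open>|z\<^sub>2|\<close>, giving \<open>f(s) = -f(1 - s)\<close>. As \<open>n > 3\<close>
  forces \<open>k > 2\<close> or \<open>m > 2\<close>, \<open>f\<close> vanishes on all of \<open>[0, 1]\<close>.\<close>

lemma orth_mat_maps_equal_norms: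
  fixes v w :: "nat \<Rightarrow> real"
  assumes norms: "(\<Sum>j<d. (v j)\<^sup>2) = (\<Sum>j<d. (w j)\<^sup>2)"
  shows "\<exists>A. orth_mat d A \<and> (\<forall>i<d. (\<Sum>j<d. A i j * v j) = w i)"
proof -
  define e where "e j = v j - w j" for j
  define N where "N = (\<Sum>j<d. (e j)\<^sup>2)"
  define c where "c = 2 / N"
    \<comment> \<open>if \<open>v = w\<close> then \<open>N = 0\<close>, so \<open>c = 0\<close> and \<open>A\<close> is the identity\<close>
  define A where "A i j = (if i = j then 1 else 0) - c * e i * e j" for i j
  have e_v: "(\<Sum>j<d. e j * v j) = N / 2"
    using norms unfolding N_def e_def
    by (simp add: power2_diff power2_eq_square algebra_simps sum.distrib sum_subtractf
        sum_distrib_left)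
  have c_N: "c * e i * N = 2 * e i" if "i < d" for i
  proof (cases "N = 0")
    case True
    then have "(e i)\<^sup>2 = 0"
      using that unfolding N_def by (simp add: sum_nonneg_eq_0_iff)
    then show ?thesis by simp
  qed (simp add: c_def)
  have "(\<Sum>j<d. A i j * v j) = w i" if "i < d" for i
  proof -
    have "A i j * v j = (if i = j then v j else 0) - c * e i * (e j * v j)" for j
      unfolding A_def by (simp add: algebra_simps)
    then have "(\<Sum>j<d. A i j * v j) = v i - c * e i * (\<Sum>j<d. e j * v j)"
      using that by (simp add: sum_subtractf sum_distrib_left)
    also have "\<dots> = v i - e i"
      using c_N[OF that] by (simp add: e_v)
    finally show ?thesis by (simp add: e_def)
  qed
  moreover have "orth_mat d A"
    unfolding orth_mat_def
  proof (intro allI impI)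
    fix i j assume "i < d" "j < d"
    have "A l i * A l j = (if l = i then if i = j then 1 else 0 else 0)
        - c * e i * (if l = j then e l else 0) - c * e j * (if l = i then e l else 0)
        + c * c * e i * e j * (e l)\<^sup>2" for l
      unfolding A_def by (simp add: algebra_simps power2_eq_square)
    then have "(\<Sum>l<d. A l i * A l j)
        = (if i = j then 1 else 0) - 2 * c * e i * e j + c * c * e i * e j * N"
      using \<open>i < d\<close> \<open>j < d\<close> unfolding N_def
      by (simp add: sum.distrib sum_subtractf sum_distrib_left[symmetric])
    also have "\<dots> = (if i = j then 1 else 0)"
      using c_N[OF \<open>i < d\<close>] by (auto simp: algebra_simps)
    finally show "(\<Sum>l<d. A l i * A l j) = (if i = j then 1 else 0)" .
  qed
  ultimately show ?thesis by blast
qed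

definition first_block_norm2 :: "nat \<Rightarrow> (nat \<Rightarrow> real) \<Rightarrow> real" where
  "first_block_norm2 k y = (\<Sum>i<k. (y i)\<^sup>2)"

definition second_block_norm2 :: "nat \<Rightarrow> nat \<Rightarrow> (nat \<Rightarrow> real) \<Rightarrow> real" where
  "second_block_norm2 k m y = (\<Sum>j<m. (y (k + j))\<^sup>2)"

lemma first_block_norm2_nonneg: "0 \<le> first_block_norm2 k y"
  unfolding first_block_norm2_def by (simp add: sum_nonneg)

lemma second_block_norm2_nonneg: "0 \<le> second_block_norm2 k m y"
  unfolding second_block_norm2_def by (simp add: sum_nonneg)

lemma sum_lessThan_add_split:
  fixes f :: "nat \<Rightarrow> 'a::comm_monoid_add"
  shows "(\<Sum>i<k + m. f i) = (\<Sum>i<k. f i) + (\<Sum>j<m. f (k + j))"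
  by (induction m) (simp_all add: add.assoc)

text \<open>The point \<open>(z\<^sub>1, x\<^sub>1, z\<^sub>2, x\<^sub>2) = (a, (b, 0, \<dots>), c, (d, 0, \<dots>))\<close>; for
  \<open>k = 2\<close> (resp. \<open>m = 2\<close>) the coordinate \<open>b\<close> (resp. \<open>d\<close>) does not exist and is ignored
  (resp. must be \<open>0\<close>, as it would lie beyond \<open>n\<close>).\<close>
definition sample_point :: "nat \<Rightarrow> real \<Rightarrow> real \<Rightarrow> real \<Rightarrow> real \<Rightarrow> nat \<Rightarrow> real" where
  "sample_point k a b c d =
     (\<lambda>i. if i = 0 then a else if i = k then c else if i = 2 then b else if i = k + 2 then d else 0)"

definition profile :: "nat \<Rightarrow> ((nat \<Rightarrow> real) \<Rightarrow> real) \<Rightarrow> real \<Rightarrow> real" where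
  "profile k u s = u (sample_point k (sqrt s) 0 (sqrt (1 - s)) 0)"

locale sphere_blocks =
  fixes n k m :: nat
  assumes k_ge_2: "2 \<le> k" and m_ge_2: "2 \<le> m" and dim_eq: "k + m = n + 1"
begin

lemma sphere_n_iff:
  "y \<in> sphere_n n \<longleftrightarrow> (\<forall>i>n. y i = 0) \<and> first_block_norm2 k y + second_block_norm2 k m y = 1"
proof -
  have "{..n} = {..<k + m}" using dim_eq by auto
  then show ?thesis
    unfolding sphere_n_def first_block_norm2_def second_block_norm2_def
    by (simp add: sum_lessThan_add_split)
qed

lemma first_block_norm2_le_1:
  assumes "y \<in> sphere_n n"
  shows "first_block_norm2 k y \<le> 1"
proof -
  have "first_block_norm2 k y + second_block_norm2 k m y = 1"
    using assms sphere_n_iff by blast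
  then show ?thesis
    using second_block_norm2_nonneg[of k m y] by linarith
qed

lemma first_block_norm2_sample_point:
  assumes "2 < k \<or> b = 0"
  shows "first_block_norm2 k (sample_point k a b c d) = a\<^sup>2 + b\<^sup>2"
proof -
  have "first_block_norm2 k (sample_point k a b c d)
      = (\<Sum>i<k. (if i = 0 then a\<^sup>2 else 0) + (if i = 2 then b\<^sup>2 else 0))"
    unfolding first_block_norm2_def by (rule sum.cong) (auto simp: sample_point_def)
  then show ?thesis
    using assms k_ge_2 by (auto simp: sum.distrib)
qed

lemma second_block_norm2_sample_point:
  assumes "2 < m \<or> d = 0"
  shows "second_block_norm2 k m (sample_point k a b c d) = c\<^sup>2 + d\<^sup>2"
proof -
  have "second_block_norm2 k m (sample_point k a b c d)
      = (\<Sum>j<m. (if j = 0 then c\<^sup>2 else 0) + (if j = 2 then d\<^sup>2 else 0))"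
    unfolding second_block_norm2_def
    by (rule sum.cong) (use k_ge_2 in \<open>auto simp: sample_point_def\<close>)
  then show ?thesis
    using assms m_ge_2 by (auto simp: sum.distrib)
qed

lemma sample_point_in_sphere:
  assumes "2 < k \<or> b = 0" "2 < m \<or> d = 0" "a\<^sup>2 + b\<^sup>2 + c\<^sup>2 + d\<^sup>2 = 1"
  shows "sample_point k a b c d \<in> sphere_n n"
proof -
  have "\<forall>i>n. sample_point k a b c d i = 0"
    using assms(2) dim_eq k_ge_2 m_ge_2 by (auto simp: sample_point_def)
  then show ?thesis
    using assms first_block_norm2_sample_point second_block_norm2_sample_point
    unfolding sphere_n_iff by simp
qed

lemma swap_map_sample_point: "swap_map k (sample_point k a b c d) = sample_point k (- c) b a d"
  using k_ge_2 unfolding swap_map_def sample_point_def by auto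

end

locale OkOm_invariant = sphere_blocks +
  fixes u :: "(nat \<Rightarrow> real) \<Rightarrow> real"
  assumes invariant: "invariant_OkOm k m u"
begin

lemma eq_if_first_block_norm2_eq:
  assumes y: "y \<in> sphere_n n" and y': "y' \<in> sphere_n n"
    and first: "first_block_norm2 k y = first_block_norm2 k y'"
  shows "u y = u y'"
proof -
  have second: "second_block_norm2 k m y = second_block_norm2 k m y'"
    using y y' first unfolding sphere_n_iff by simp
  obtain A where A: "orth_mat k A" "\<forall>i<k. (\<Sum>j<k. A i j * y j) = y' i"
    using orth_mat_maps_equal_norms[where d = k and v = y and w = y'] first
    unfolding first_block_norm2_def by blast
  obtain B where B: "orth_mat m B" "\<forall>i<m. (\<Sum>j<m. B i j * y (k + j)) = y' (k + i)"
    using orth_mat_maps_equal_norms[where d = m and v = "\<lambda>j. y (k + j)" and w = "\<lambda>j. y' (k + j)"]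
      second
    unfolding second_block_norm2_def by blast
  have "act_OkOm k m A B y = y'"
  proof
    fix i
    consider "i < k" | "k \<le> i" "i < k + m" | "n < i"
      using dim_eq by linarith
    then show "act_OkOm k m A B y i = y' i"
    proof cases
      case 2
      then show ?thesis
        using B(2)[rule_format, of "i - k"] by (simp add: act_OkOm_def)
    qed (use A y' dim_eq in \<open>auto simp: act_OkOm_def sphere_n_def\<close>)
  qed
  moreover have "y \<in> sphere_n (k + m - 1)"
    using y dim_eq by simp
  ultimately show ?thesis
    using invariant A(1) B(1) unfolding invariant_OkOm_def by metis
qed

lemma eq_profile_first_block_norm2:
  assumes y: "y \<in> sphere_n n"
  shows "u y = profile k u (first_block_norm2 k y)"
proof -
  define s where "s = first_block_norm2 k y"
  have s: "0 \<le> s" "s \<le> 1"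
    using y first_block_norm2_le_1 first_block_norm2_nonneg unfolding s_def by auto
  let ?p = "sample_point k (sqrt s) 0 (sqrt (1 - s)) 0"
  have "?p \<in> sphere_n n"
    using s by (intro sample_point_in_sphere) auto
  moreover have "first_block_norm2 k ?p = s"
    using s by (simp add: first_block_norm2_sample_point)
  ultimately show ?thesis
    using eq_if_first_block_norm2_eq[OF y] unfolding profile_def s_def by simp
qed

end

locale OkOm_invariant_swap_odd = OkOm_invariant +
  assumes swap_odd: "\<forall>y\<in>sphere_n n. u y = - u (swap_map k y)"
begin

lemma profile_swap:
  assumes "0 \<le> s" "s \<le> 1"
  shows "profile k u s = - profile k u (1 - s)"
proof -
  let ?p = "sample_point k (sqrt s) 0 (sqrt (1 - s)) 0"
  let ?q = "sample_point k (- sqrt (1 - s)) 0 (sqrt s) 0"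
  have p: "?p \<in> sphere_n n" and q: "?q \<in> sphere_n n"
    using assms by (auto intro: sample_point_in_sphere)
  have "profile k u s = - u ?q"
    using swap_odd p unfolding profile_def by (simp add: swap_map_sample_point)
  also have "u ?q = profile k u (1 - s)"
    using assms eq_profile_first_block_norm2[OF q] by (simp add: first_block_norm2_sample_point)
  finally show ?thesis .
qed

lemma vanishes_at_sample_point_diag:
  assumes "2 < k \<or> b = 0" "2 < m \<or> d = 0" "2 * a\<^sup>2 + b\<^sup>2 + d\<^sup>2 = 1"
  shows "u (sample_point k a b a d) = 0"
proof -
  let ?p = "sample_point k a b a d"
  have p: "?p \<in> sphere_n n" and p': "swap_map k ?p \<in> sphere_n n"
    using assms by (auto simp: swap_map_sample_point intro!: sample_point_in_sphere)
  have "first_block_norm2 k (swap_map k ?p) = first_block_norm2 k ?p"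
    using assms(1) by (simp add: swap_map_sample_point first_block_norm2_sample_point)
  then have "u (swap_map k ?p) = u ?p"
    using eq_if_first_block_norm2_eq[OF p' p] by simp
  then show ?thesis
    using swap_odd p by force
qed

lemma profile_vanishes_le_half:
  assumes "2 < m" "0 \<le> s" "s \<le> 1 / 2"
  shows "profile k u s = 0"
proof -
  let ?p = "sample_point k (sqrt s) 0 (sqrt s) (sqrt (1 - 2 * s))"
  have "?p \<in> sphere_n n"
    using assms by (intro sample_point_in_sphere) auto
  moreover have "first_block_norm2 k ?p = s"
    using assms by (simp add: first_block_norm2_sample_point)
  ultimately have "profile k u s = u ?p"
    using eq_profile_first_block_norm2 by simp
  also have "\<dots> = 0"
    using assms by (intro vanishes_at_sample_point_diag) auto
  finally show ?thesis .
qed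

lemma profile_vanishes_ge_half:
  assumes "2 < k" "1 / 2 \<le> s" "s \<le> 1"
  shows "profile k u s = 0"
proof -
  let ?p = "sample_point k (sqrt (1 - s)) (sqrt (2 * s - 1)) (sqrt (1 - s)) 0"
  have "?p \<in> sphere_n n"
    using assms by (intro sample_point_in_sphere) auto
  moreover have "first_block_norm2 k ?p = s"
    using assms by (simp add: first_block_norm2_sample_point)
  ultimately have "profile k u s = u ?p"
    using eq_profile_first_block_norm2 by simp
  also have "\<dots> = 0"
    using assms by (intro vanishes_at_sample_point_diag) auto
  finally show ?thesis .
qed

lemma profile_vanishes:
  assumes "2 < k \<or> 2 < m" "0 \<le> s" "s \<le> 1"
  shows "profile k u s = 0"
proof -
  have "profile k u s = 0 \<or> profile k u (1 - s) = 0"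
  proof (cases "2 < m")
    case True
    then show ?thesis
      using assms(2,3) profile_vanishes_le_half[of s] profile_vanishes_le_half[of "1 - s"]
      by (cases "s \<le> 1 / 2") auto
  next
    case False
    then show ?thesis
      using assms profile_vanishes_ge_half[of s] profile_vanishes_ge_half[of "1 - s"]
      by (cases "1 / 2 \<le> s") auto
  qed
  then show ?thesis
    using profile_swap[OF assms(2,3)] by auto
qed

end

theorem proposition4p2:
  fixes n k m :: nat and u :: "(nat \<Rightarrow> real) \<Rightarrow> real"
  assumes "n > 3" and "k \<ge> 2" and "m \<ge> 2" and "k + m = n + 1"
    and "invariant_OkOm k m u"
    and "\<forall>y\<in>sphere_n n. u y = - u (swap_map k y)"
  shows "\<forall>y\<in>sphere_n n. u y = 0"
proof
  interpret OkOm_invariant_swap_odd n k m u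
    using assms(2-6) by unfold_locales
  fix y assume y: "y \<in> sphere_n n"
  have "2 < k \<or> 2 < m"
    using assms(1,4) by linarith
  moreover have "0 \<le> first_block_norm2 k y" "first_block_norm2 k y \<le> 1"
    using y first_block_norm2_nonneg first_block_norm2_le_1 by auto
  ultimately show "u y = 0"
    using eq_profile_first_block_norm2[OF y] profile_vanishes by simp
qed

end
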